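(* Consider the nonparametric change point model in the context, with minimal spacing $\delta$. For $1\le s<b<e\le T$ and $z\in\mathbb{R}$, let $\Lambda^b_{s,e}(z)=D^b_{s,e}(z)-\Delta^b_{s,e}(z)$. Then \[ \mathbb{P}\Big\{\max_{1\le s<b<e\le T}\sup_{z\in\mathbb{R}}|\Lambda^b_{s,e}(z)|>\sqrt{\log\Big(\frac{T^4}{12\delta}\Big)+\log(n_{1:T})}+6\sqrt{\log(n_{1:T})}+\frac{48\log(n_{1:T})}{\sqrt{n_{1:T}}}\Big\} \] is at most \[ \frac{12\log(n_{1:T})}{T^3n_{1:T}}+\frac{24\,T}{n_{1:T}\log(n_{1:T})\,\delta}. \] Moreover, \[ \mathbb{P}\Big\{\max_{1\le s<e\le T}\sup_{z\in\mathbb{R}}\Big|\frac{1}{\sqrt{n_{s:e}}}\sum_{t=s}^e\sum_{i=1}^{n_t}\big(\mathbb{1}\{Y_{t,i}\le z\}-\mathbb{E}\,\mathbb{1}\{Y_{t,i}\le z\}\big)\Big|>\sqrt{\log\Big(\frac{T^4}{12\delta}\Big)+\log(n_{1:T})}+6\sqrt{\log(n_{1:T})}+\frac{48\log(n_{1:T})}{\sqrt{n_{1:T}}}\Big\} \] is at most \[ \frac{12\log(n_{1:T})}{T^3n_{1:T}}+\frac{24\,T}{n_{1:T}\log(n_{1:T})\,\delta}. \]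
   Context: Model: $\{Y_{t,i}: t=1,\dots,T,\ i=1,\dots,n_t\}$ are independent with $Y_{t,i}\sim F_t$, where the $F_t$ are CDFs. Change points: there are integers $0=\eta_0<\eta_1<\dots<\eta_K<\eta_{K+1}=T$ with $F_{\eta_k+1}=\dots=F_{\eta_{k+1}}$ for $k=0,\dots,K$, $F_{\eta_k}\ne F_{\eta_k+1}$ for $k=1,\dots,K$, and $\min_k(\eta_k-\eta_{k-1})\ge\delta>0$. Notation: $n_{s:e}=\sum_{t=s}^e n_t$. Sample and population cumulative distributions: $\widehat F_{s:e}(z)=n_{s:e}^{-1}\sum_{t=s}^e\sum_{i=1}^{n_t}\mathbb{1}\{Y_{t,i}\le z\}$ and $F_{s:e}(z)=n_{s:e}^{-1}\sum_{t=s}^e n_tF_t(z)$. CUSUM statistics: \[ D^b_{s,e}(z)=\sqrt{\frac{n_{s:b}n_{(b+1):e}}{n_{s:e}}}\{\widehat F_{s:b}(z)-\widehat F_{(b+1):e}(z)\},\qquad \Delta^b_{s,e}(z)=\sqrt{\frac{n_{s:b}n_{(b+1):e}}{n_{s:e}}}\{F_{s:b}(z)-F_{(b+1):e}(z)\}. \] *)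

theory Defs
  imports "HOL-Probability.Probability"
begin

definition nsum :: "(nat \<Rightarrow> nat) \<Rightarrow> nat \<Rightarrow> nat \<Rightarrow> nat" where
  "nsum n s e = (\<Sum>t = s..e. n t)"

definition Fhat :: "(nat \<Rightarrow> nat \<Rightarrow> 'a \<Rightarrow> real) \<Rightarrow> (nat \<Rightarrow> nat) \<Rightarrow> nat \<Rightarrow> nat \<Rightarrow> real \<Rightarrow> 'a \<Rightarrow> real" where
  "Fhat Y n s e z w =
     (1 / real (nsum n s e)) * (\<Sum>t = s..e. \<Sum>i = 1..n t. (if Y t i w \<le> z then 1 else 0))"

definition Fpop :: "(nat \<Rightarrow> real \<Rightarrow> real) \<Rightarrow> (nat \<Rightarrow> nat) \<Rightarrow> nat \<Rightarrow> nat \<Rightarrow> real \<Rightarrow> real" where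
  "Fpop F n s e z = (1 / real (nsum n s e)) * (\<Sum>t = s..e. real (n t) * F t z)"

definition Dcusum :: "(nat \<Rightarrow> nat \<Rightarrow> 'a \<Rightarrow> real) \<Rightarrow> (nat \<Rightarrow> nat) \<Rightarrow> nat \<Rightarrow> nat \<Rightarrow> nat \<Rightarrow> real \<Rightarrow> 'a \<Rightarrow> real" where
  "Dcusum Y n s b e z w =
     sqrt (real (nsum n s b) * real (nsum n (b + 1) e) / real (nsum n s e)) *
     (Fhat Y n s b z w - Fhat Y n (b + 1) e z w)"

definition Deltacusum :: "(nat \<Rightarrow> real \<Rightarrow> real) \<Rightarrow> (nat \<Rightarrow> nat) \<Rightarrow> nat \<Rightarrow> nat \<Rightarrow> nat \<Rightarrow> real \<Rightarrow> real" where
  "Deltacusum F n s b e z =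
     sqrt (real (nsum n s b) * real (nsum n (b + 1) e) / real (nsum n s e)) *
     (Fpop F n s b z - Fpop F n (b + 1) e z)"

end

(*
  Write N = n_{1:T} and, for a block J of observations and z real,
  C_J(z) = sum over (t,i) in J of (1{Y_{t,i} <= z} - F_t(z)).  For fixed z, Hoeffding's
  inequality bounds the probability of |C_J(z)| >= 2 sqrt(|J| log N) by 2 N^-8.

  The supremum over z is reduced to finitely many half-lines.  Let H be the sum of all N
  distribution functions and q_k its quantile at level k = 1..N.  Every (-inf, z] is
  bracketed by half-lines (-inf, q_k] or (-inf, q_k) whose H-measures differ from H(z) by
  at most 1, while the counting part of C_J is monotone in the half-line.  So |C_J(z)|
  exceeds the maximum over these 2N grid half-lines by at most 1.  A union bound over the grid
  and the at most T^2 <= N^2 blocks {s..e} gives a single event of probability at most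
  4 N^-5 outside which |C_{s:e}(z)| <= (2 sqrt(log N) + 1) sqrt(n_{s:e}) for all s, e, z.

  Off that event both statistics are at most 2 (2 sqrt(log N) + 1): for the CUSUM this
  uses sqrt(ab/(a+b)) <= min(sqrt a, sqrt b).  The threshold of the statement dominates
  this value and the stated probability bound dominates 4 N^-5.
*)
theory Submission
  imports Defs
begin

section \<open>Uniform deviations of independent indicator counts\<close>

locale indep_real_family = prob_space M for M :: "'a measure" +
  fixes X :: "'i \<Rightarrow> 'a \<Rightarrow> real" and I :: "'i set"
  assumes finite_index: "finite I"
    and indep: "indep_vars (\<lambda>_. borel) X I"
begin

definition law :: "'i \<Rightarrow> real measure" where
  "law i = distr M borel (X i)"

definition centered_count :: "'i set \<Rightarrow> real set \<Rightarrow> 'a \<Rightarrow> real" where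
  "centered_count J A w = (\<Sum>i\<in>J. indicator A (X i w) - measure (law i) A)"

definition sum_cdf :: "real \<Rightarrow> real" where
  "sum_cdf z = (\<Sum>i\<in>I. cdf (law i) z)"

definition sum_cdf_left :: "real \<Rightarrow> real" where
  "sum_cdf_left z = (\<Sum>i\<in>I. measure (law i) {..<z})"

definition level_quantile :: "nat \<Rightarrow> real" where
  "level_quantile k = Inf {z. real k \<le> sum_cdf z}"

lemma random_variable_X: "i \<in> I \<Longrightarrow> random_variable borel (X i)"
  using indep by (simp add: indep_vars_def)

lemma real_distribution_law: "i \<in> I \<Longrightarrow> real_distribution (law i)"
  unfolding law_def by (simp add: random_variable_X)

lemma finite_borel_measure_law: "i \<in> I \<Longrightarrow> finite_borel_measure (law i)"
  by (rule real_distribution.finite_borel_measure_M[OF real_distribution_law])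

lemma measure_law_UNIV: "i \<in> I \<Longrightarrow> measure (law i) UNIV = 1"
  using prob_space.prob_space[OF real_distribution.axioms(1)[OF real_distribution_law]]
  by (simp add: law_def)

lemma measure_law_mono:
  "i \<in> I \<Longrightarrow> A \<subseteq> B \<Longrightarrow> B \<in> sets borel \<Longrightarrow> measure (law i) A \<le> measure (law i) B"
  using finite_measure.finite_measure_mono[OF finite_borel_measure.axioms(1)[OF finite_borel_measure_law]]
  by (simp add: law_def)

lemma centered_count_measurable:
  assumes "J \<subseteq> I" "A \<in> sets borel"
  shows "centered_count J A \<in> borel_measurable M"
proof -
  have "(\<lambda>w. indicator A (X i w) :: real) \<in> borel_measurable M" if "i \<in> J" for i
    using measurable_compose[OF random_variable_X borel_measurable_indicator[OF assms(2)]] that assms(1)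
    by (auto simp: o_def)
  then show ?thesis
    unfolding centered_count_def[abs_def] by measurable
qed

lemma centered_count_Hoeffding:
  assumes "J \<subseteq> I" "J \<noteq> {}" "A \<in> sets borel" "0 \<le> \<epsilon>"
  shows "prob {w \<in> space M. \<epsilon> \<le> \<bar>centered_count J A w\<bar>} \<le> 2 * exp (-2 * \<epsilon>\<^sup>2 / card J)"
proof -
  let ?Z = "\<lambda>i w. indicator A (X i w) :: real"
  have "finite J"
    using assms(1) finite_index by (rule finite_subset)
  have "indep_vars (\<lambda>_. borel) ?Z J"
    using indep_vars_compose2[OF indep_vars_subset[OF indep assms(1)],
        of "\<lambda>_. indicator A :: real \<Rightarrow> real" "\<lambda>_. borel"] assms(3)
    by auto
  then interpret Hoeffding_ineq M J ?Z "\<lambda>_. 0" "\<lambda>_. 1" "\<Sum>i\<in>J. expectation (?Z i)"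
    by unfold_locales (auto simp: \<open>finite J\<close> indicator_def)
  have "expectation (?Z i) = measure (law i) A" if "i \<in> J" for i
    using that assms random_variable_X unfolding law_def
    by (subst integral_distr[symmetric]) auto
  then have "centered_count J A w = (\<Sum>i\<in>J. ?Z i w) - (\<Sum>i\<in>J. expectation (?Z i))" for w
    unfolding centered_count_def by (simp add: sum_subtractf)
  moreover have "(\<Sum>i\<in>J. (1 - 0)\<^sup>2) = real (card J)" "0 < real (card J)"
    using \<open>finite J\<close> assms(2) by (simp_all add: card_gt_0_iff)
  ultimately show ?thesis
    using Hoeffding_ineq_abs_ge[OF assms(4)] by simp
qed

lemma centered_count_diff_le:
  assumes "J \<subseteq> I" "A \<subseteq> B" "B \<in> sets borel"
  shows "centered_count J A w - centered_count J B w \<le> (\<Sum>i\<in>I. measure (law i) B - measure (law i) A)"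
proof -
  have "centered_count J A w - centered_count J B w =
      (\<Sum>i\<in>J. indicator A (X i w) - indicator B (X i w)) + (\<Sum>i\<in>J. measure (law i) B - measure (law i) A)"
    unfolding centered_count_def by (simp add: sum_subtractf[symmetric] sum.distrib[symmetric] algebra_simps)
  also have "(\<Sum>i\<in>J. indicator A (X i w) - indicator B (X i w)) \<le> (0::real)"
    using assms(2) by (intro sum_nonpos) (auto simp: indicator_def)
  also have "(\<Sum>i\<in>J. measure (law i) B - measure (law i) A) \<le> (\<Sum>i\<in>I. measure (law i) B - measure (law i) A)"
    using assms finite_index by (intro sum_mono2) (auto simp: measure_law_mono)
  finally show ?thesis
    by simp
qed

lemma centered_count_empty [simp]: "centered_count J {} w = 0"
  by (simp add: centered_count_def)

lemma centered_count_UNIV: "J \<subseteq> I \<Longrightarrow> centered_count J UNIV w = 0"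
  unfolding centered_count_def by (intro sum.neutral) (auto simp: measure_law_UNIV)

lemma sum_measure_law_UNIV: "(\<Sum>i\<in>I. measure (law i) UNIV) = card I"
  by (simp add: measure_law_UNIV)

lemma sum_cdf_mono: "x \<le> y \<Longrightarrow> sum_cdf x \<le> sum_cdf y"
  unfolding sum_cdf_def
  by (intro sum_mono finite_borel_measure.cdf_nondecreasing[OF finite_borel_measure_law])

lemma sum_cdf_nonneg: "0 \<le> sum_cdf z"
  unfolding sum_cdf_def by (intro sum_nonneg finite_borel_measure.cdf_nonneg[OF finite_borel_measure_law])

lemma sum_cdf_le_card: "sum_cdf z \<le> card I"
proof -
  have "sum_cdf z \<le> (\<Sum>i\<in>I. 1)"
    unfolding sum_cdf_def by (intro sum_mono real_distribution.cdf_bounded_prob[OF real_distribution_law])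
  then show ?thesis
    by simp
qed

lemma sum_cdf_at_right: "(sum_cdf \<longlongrightarrow> sum_cdf z) (at_right z)"
  unfolding sum_cdf_def[abs_def] using finite_borel_measure.cdf_is_right_cont[OF finite_borel_measure_law]
  by (intro tendsto_sum) (simp add: continuous_within)

lemma sum_cdf_at_left: "(sum_cdf \<longlongrightarrow> sum_cdf_left z) (at_left z)"
  unfolding sum_cdf_def[abs_def] sum_cdf_left_def
  by (intro tendsto_sum finite_borel_measure.cdf_at_left[OF finite_borel_measure_law])

lemma sum_cdf_at_top: "(sum_cdf \<longlongrightarrow> card I) at_top"
proof -
  have "(sum_cdf \<longlongrightarrow> (\<Sum>i\<in>I. 1)) at_top"
    unfolding sum_cdf_def[abs_def]
    by (intro tendsto_sum real_distribution.cdf_lim_at_top_prob[OF real_distribution_law])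
  then show ?thesis
    by simp
qed

lemma sum_cdf_at_bot: "(sum_cdf \<longlongrightarrow> 0) at_bot"
proof -
  have "(sum_cdf \<longlongrightarrow> (\<Sum>i\<in>I. 0)) at_bot"
    unfolding sum_cdf_def[abs_def]
    by (intro tendsto_sum finite_borel_measure.cdf_lim_at_bot finite_borel_measure_law)
  then show ?thesis
    by simp
qed

lemma bdd_below_level_set: "1 \<le> k \<Longrightarrow> bdd_below {z. real k \<le> sum_cdf z}"
proof -
  assume "1 \<le> k"
  have "\<forall>\<^sub>F z in at_bot. sum_cdf z < 1"
    by (rule order_tendstoD(2)[OF sum_cdf_at_bot]) simp
  then obtain B where B: "\<And>z. z \<le> B \<Longrightarrow> sum_cdf z < 1"
    by (auto simp: eventually_at_bot_linorder)
  have "B \<le> z" if "real k \<le> sum_cdf z" for z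
  proof (rule ccontr)
    assume "\<not> B \<le> z"
    then have "sum_cdf z < 1"
      by (intro B) simp
    with that \<open>1 \<le> k\<close> show False
      by simp
  qed
  then show ?thesis
    by (intro bdd_belowI[of _ B]) auto
qed

lemma level_quantile_le: "1 \<le> k \<Longrightarrow> real k \<le> sum_cdf z \<Longrightarrow> level_quantile k \<le> z"
  unfolding level_quantile_def by (rule cInf_lower) (auto intro: bdd_below_level_set)

lemma sum_cdf_level_quantile:
  assumes "1 \<le> k" "real k \<le> sum_cdf z"
  shows "real k \<le> sum_cdf (level_quantile k)"
proof (rule tendsto_lowerbound[OF sum_cdf_at_right])
  have "real k \<le> sum_cdf y" if less: "level_quantile k < y" for y
  proof -
    have "{z. real k \<le> sum_cdf z} \<noteq> {}"
      using assms(2) by auto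
    then obtain x where "real k \<le> sum_cdf x" "x < y"
      using less cInf_less_iff[OF _ bdd_below_level_set[OF assms(1)]]
      unfolding level_quantile_def by auto
    then show ?thesis
      using sum_cdf_mono[of x y] by linarith
  qed
  then show "\<forall>\<^sub>F y in at_right (level_quantile k). real k \<le> sum_cdf y"
    by (rule eventually_mono[OF eventually_at_right_less])
qed simp

lemma sum_cdf_left_level_quantile:
  assumes "1 \<le> k"
  shows "sum_cdf_left (level_quantile k) \<le> real k"
proof (rule tendsto_upperbound[OF sum_cdf_at_left])
  have "sum_cdf y \<le> real k" if "y < level_quantile k" for y
    using that level_quantile_le[OF assms, of y] by linarith
  then show "\<forall>\<^sub>F y in at_left (level_quantile k). sum_cdf y \<le> real k"
    by (rule eventually_at_leftI[of "level_quantile k - 1"]) auto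
qed simp

(* The point z is compared with a grid point at which sum_cdf differs from its value at z by
   at most 1; near the ends of the range the sets UNIV and {} take the place of the grid point. *)

lemma centered_count_le_grid:
  assumes "J \<subseteq> I" "0 \<le> r"
    and grid: "\<And>k. k \<in> {1..card I} \<Longrightarrow> centered_count J {..<level_quantile k} w \<le> r"
  shows "centered_count J {..z} w \<le> r + 1"
proof (cases "real (card I) - 1 \<le> sum_cdf z")
  case True
  have "centered_count J {..z} w - centered_count J UNIV w
      \<le> (\<Sum>i\<in>I. measure (law i) UNIV - measure (law i) {..z})"
    using assms(1) by (intro centered_count_diff_le) auto
  also have "\<dots> = real (card I) - sum_cdf z"
    by (simp add: sum_subtractf sum_measure_law_UNIV sum_cdf_def cdf_def)
  finally show ?thesis
    using True assms(2) centered_count_UNIV[OF assms(1)] by simp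
next
  case False
  define k where "k = nat \<lfloor>sum_cdf z\<rfloor> + 1"
  have k: "real k - 1 \<le> sum_cdf z" "sum_cdf z < real k" "1 \<le> k"
    unfolding k_def using sum_cdf_nonneg[of z] by (auto simp: of_nat_nat) linarith+
  have "\<lfloor>sum_cdf z\<rfloor> < int (card I) - 1"
    using False by (simp add: floor_less_iff)
  then have "int k \<le> int (card I) - 1"
    unfolding k_def using sum_cdf_nonneg[of z] by simp
  then have "real k \<le> real (card I) - 1"
    using of_int_le_iff[of "int k" "int (card I) - 1", where 'a=real] by simp
  moreover obtain z' where "real (card I) - 1 < sum_cdf z'"
    using eventually_happens'[OF _ order_tendstoD(1)[OF sum_cdf_at_top]] by fastforce
  ultimately have "real k \<le> sum_cdf z'"
    by linarith
  define v where "v = level_quantile k"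
  have v: "real k \<le> sum_cdf v" "sum_cdf_left v \<le> real k"
    unfolding v_def using sum_cdf_level_quantile sum_cdf_left_level_quantile k(3) \<open>real k \<le> sum_cdf z'\<close>
    by auto
  have "z < v"
    using sum_cdf_mono[of v z] v(1) k(2) by linarith
  have "centered_count J {..z} w - centered_count J {..<v} w
      \<le> (\<Sum>i\<in>I. measure (law i) {..<v} - measure (law i) {..z})"
    using assms(1) \<open>z < v\<close> by (intro centered_count_diff_le) auto
  also have "\<dots> = sum_cdf_left v - sum_cdf z"
    by (simp add: sum_subtractf sum_cdf_left_def sum_cdf_def cdf_def)
  finally show ?thesis
    using grid[of k] v k \<open>real k \<le> real (card I) - 1\<close> unfolding v_def by fastforce
qed

lemma centered_count_ge_grid:
  assumes "J \<subseteq> I" "0 \<le> r"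
    and grid: "\<And>k. k \<in> {1..card I} \<Longrightarrow> - r \<le> centered_count J {..level_quantile k} w"
  shows "- (r + 1) \<le> centered_count J {..z} w"
proof (cases "sum_cdf z < 1")
  case True
  have "centered_count J {} w - centered_count J {..z} w
      \<le> (\<Sum>i\<in>I. measure (law i) {..z} - measure (law i) {})"
    using assms(1) by (intro centered_count_diff_le) auto
  also have "\<dots> = sum_cdf z"
    by (simp add: sum_cdf_def cdf_def)
  finally show ?thesis
    using True assms(2) by simp
next
  case False
  define k where "k = nat \<lfloor>sum_cdf z\<rfloor>"
  have k: "real k \<le> sum_cdf z" "sum_cdf z < real k + 1" "1 \<le> k"
    unfolding k_def using False sum_cdf_nonneg[of z] by (auto simp: of_nat_nat) linarith
  have "k \<le> card I"
    using k(1) sum_cdf_le_card[of z] by linarith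
  define u where "u = level_quantile k"
  have u: "real k \<le> sum_cdf u" "u \<le> z"
    unfolding u_def using sum_cdf_level_quantile level_quantile_le k by auto
  have "centered_count J {..u} w - centered_count J {..z} w
      \<le> (\<Sum>i\<in>I. measure (law i) {..z} - measure (law i) {..u})"
    using assms(1) u(2) by (intro centered_count_diff_le) auto
  also have "\<dots> = sum_cdf z - sum_cdf u"
    by (simp add: sum_subtractf sum_cdf_def cdf_def)
  finally show ?thesis
    using grid[of k] u k \<open>k \<le> card I\<close> unfolding u_def by fastforce
qed

lemma centered_count_uniform_bound:
  assumes "J \<subseteq> I" "J \<noteq> {}" "0 \<le> \<epsilon>"
  shows "\<exists>G\<in>sets M. prob G \<le> 4 * real (card I) * exp (-2 * \<epsilon>\<^sup>2 / card J) \<and>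
           (\<forall>w\<in>space M - G. \<forall>z. \<bar>centered_count J {..z} w\<bar> \<le> \<epsilon> + 1)"
proof -
  define bad where "bad A = {w \<in> space M. \<epsilon> \<le> \<bar>centered_count J A w\<bar>}" for A
  define G where "G = (\<Union>k\<in>{1..card I}. bad {..level_quantile k} \<union> bad {..<level_quantile k})"
  have bad_sets: "bad A \<in> sets M" if "A \<in> sets borel" for A
  proof -
    have [measurable]: "centered_count J A \<in> borel_measurable M"
      using assms(1) that by (rule centered_count_measurable)
    show ?thesis
      unfolding bad_def by measurable
  qed
  have bad_prob: "prob (bad A) \<le> 2 * exp (-2 * \<epsilon>\<^sup>2 / card J)" if "A \<in> sets borel" for A
    unfolding bad_def using assms(1,2) that assms(3) by (rule centered_count_Hoeffding)
  have "prob G \<le> (\<Sum>k\<in>{1..card I}. prob (bad {..level_quantile k} \<union> bad {..<level_quantile k}))"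
    unfolding G_def by (rule measure_UNION_le) (auto intro!: sets.Un bad_sets)
  also have "\<dots> \<le>
      (\<Sum>k\<in>{1..card I}. 2 * exp (-2 * \<epsilon>\<^sup>2 / card J) + 2 * exp (-2 * \<epsilon>\<^sup>2 / card J))"
    by (intro sum_mono order_trans[OF measure_Un_le] add_mono bad_prob bad_sets) auto
  also have "\<dots> = 4 * real (card I) * exp (-2 * \<epsilon>\<^sup>2 / card J)"
    by simp
  finally have "prob G \<le> 4 * real (card I) * exp (-2 * \<epsilon>\<^sup>2 / card J)" .
  moreover have "G \<in> sets M"
    unfolding G_def using bad_sets by auto
  moreover have "\<bar>centered_count J {..z} w\<bar> \<le> \<epsilon> + 1" if "w \<in> space M - G" for w z
  proof -
    have "\<not> \<epsilon> \<le> \<bar>centered_count J {..level_quantile k} w\<bar>"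
      "\<not> \<epsilon> \<le> \<bar>centered_count J {..<level_quantile k} w\<bar>" if "k \<in> {1..card I}" for k
      using \<open>w \<in> space M - G\<close> that unfolding G_def bad_def by auto
    then have "centered_count J {..<level_quantile k} w \<le> \<epsilon>"
      "- \<epsilon> \<le> centered_count J {..level_quantile k} w" if "k \<in> {1..card I}" for k
      using that by fastforce+
    then have "centered_count J {..z} w \<le> \<epsilon> + 1" "- (\<epsilon> + 1) \<le> centered_count J {..z} w"
      by (intro centered_count_le_grid[OF assms(1,3)] centered_count_ge_grid[OF assms(1,3)]; blast)+
    then show ?thesis
      by linarith
  qed
  ultimately show ?thesis
    by blast
qed

lemma centered_count_block_bound:
  assumes "J \<subseteq> I" "J \<noteq> {}" "2 \<le> card I"
  shows "\<exists>G\<in>sets M. prob G \<le> 4 / real (card I) ^ 7 \<and>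
    (\<forall>w\<in>space M - G. \<forall>z. \<bar>centered_count J {..z} w\<bar> \<le> 2 * sqrt (ln (card I) * card J) + 1)"
proof -
  define N where "N = real (card I)"
  have "0 < N" "0 < ln N"
    unfolding N_def using assms(3) by simp_all
  then have "exp (- 8 * ln N) = N powr - 8"
    by (simp add: powr_def)
  also have "\<dots> = 1 / N ^ 8"
    using \<open>0 < N\<close> by (rule powr_neg_numeral)
  finally have "4 * N * exp (- 8 * ln N) = 4 / N ^ 7"
    using \<open>0 < N\<close> by (simp add: field_simps power_eq_if)
  moreover have "0 < card J"
    using assms(1,2) finite_index by (metis card_gt_0_iff finite_subset)
  then have "-2 * (2 * sqrt (ln N * card J))\<^sup>2 / card J = - 8 * ln N"
    using \<open>0 < ln N\<close> by (simp add: power_mult_distrib)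
  ultimately show ?thesis
    using centered_count_uniform_bound[OF assms(1,2), of "2 * sqrt (ln N * card J)"] \<open>0 < ln N\<close>
    unfolding N_def by simp
qed

lemma uniform_bound_over_blocks:
  assumes "finite \<J>" "\<And>J. J \<in> \<J> \<Longrightarrow> J \<subseteq> I" "{} \<notin> \<J>" "2 \<le> card I"
  shows "\<exists>G\<in>sets M. prob G \<le> 4 * real (card \<J>) / real (card I) ^ 7 \<and>
    (\<forall>w\<in>space M - G. \<forall>J\<in>\<J>. \<forall>z. \<bar>centered_count J {..z} w\<bar> \<le> 2 * sqrt (ln (card I) * card J) + 1)"
proof -
  define N where "N = real (card I)"
  have "\<exists>G\<in>sets M. prob G \<le> 4 / N ^ 7 \<and>
      (\<forall>w\<in>space M - G. \<forall>z. \<bar>centered_count J {..z} w\<bar> \<le> 2 * sqrt (ln N * card J) + 1)"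
    if "J \<in> \<J>" for J
    unfolding N_def using that assms(2-4) by (intro centered_count_block_bound) auto
  then obtain G where G: "\<And>J. J \<in> \<J> \<Longrightarrow> G J \<in> sets M \<and> prob (G J) \<le> 4 / N ^ 7 \<and>
      (\<forall>w\<in>space M - G J. \<forall>z. \<bar>centered_count J {..z} w\<bar> \<le> 2 * sqrt (ln N * card J) + 1)"
    by metis
  have "prob (\<Union>J\<in>\<J>. G J) \<le> (\<Sum>J\<in>\<J>. prob (G J))"
    using assms(1) G by (intro measure_UNION_le) auto
  also have "\<dots> \<le> (\<Sum>J\<in>\<J>. 4 / N ^ 7)"
    using G by (intro sum_mono) auto
  finally have "prob (\<Union>J\<in>\<J>. G J) \<le> 4 * real (card \<J>) / N ^ 7"
    by (simp add: mult.commute)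
  moreover have "(\<Union>J\<in>\<J>. G J) \<in> sets M"
    using assms(1) G by auto
  ultimately show ?thesis
    using G unfolding N_def by (intro bexI[of _ "\<Union>J\<in>\<J>. G J"]) auto
qed

end

lemma one_le_sqrt_ln_add:
  fixes x :: real
  assumes "2 \<le> x"
  shows "1 \<le> sqrt (ln x) + 24 * ln x / sqrt x"
proof -
  have "1 / 2 \<le> ln (2 :: real)"
    using ln_le_minus_one[of "1 / 2 :: real"] by (simp add: ln_div)
  then have ln_x: "1 / 2 \<le> ln x"
    using assms by (smt (verit) ln_le_cancel_iff)
  show ?thesis
  proof (cases "4 \<le> x")
    case True
    have "ln (4 :: real) = 2 * ln 2"
      using ln_realpow[of 2 2] by simp
    moreover have "ln 4 \<le> ln x"
      using True by simp
    ultimately have "1 \<le> ln x"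
      using \<open>1 / 2 \<le> ln 2\<close> by linarith
    then show ?thesis
      using True by (smt (verit) divide_nonneg_pos real_sqrt_ge_one real_sqrt_gt_zero)
  next
    case False
    then have "sqrt x \<le> 2"
      using real_sqrt_le_iff[of x 4] by simp
    then have "24 * (1 / 2) / 2 \<le> 24 * ln x / sqrt x"
      using ln_x assms by (intro frac_le) auto
    moreover have "0 \<le> sqrt (ln x)"
      using ln_x by simp
    ultimately show ?thesis
      by linarith
  qed
qed

lemma sqrt_harmonic_mult_div_le:
  fixes a b c x :: real
  assumes "0 < a" "0 < b" "\<bar>x\<bar> \<le> c * sqrt a"
  shows "sqrt (a * b / (a + b)) * \<bar>x\<bar> / a \<le> c"
proof -
  have "sqrt (a * b / (a + b)) \<le> sqrt a"
    using assms(1,2) by (auto intro!: real_sqrt_le_mono simp: field_simps)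
  then have "sqrt (a * b / (a + b)) * \<bar>x\<bar> \<le> sqrt a * (c * sqrt a)"
    using assms by (intro mult_mono) auto
  also have "\<dots> = c * a"
    using assms(1) by simp
  finally show ?thesis
    using assms(1) by (simp add: divide_le_eq)
qed

lemma cusum_deviation_le:
  fixes a b c x y :: real
  assumes "0 < a" "0 < b" "\<bar>x\<bar> \<le> c * sqrt a" "\<bar>y\<bar> \<le> c * sqrt b"
  shows "\<bar>sqrt (a * b / (a + b)) * (x / a - y / b)\<bar> \<le> 2 * c"
proof -
  define g where "g = sqrt (a * b / (a + b))"
  have "0 \<le> g"
    unfolding g_def using assms(1,2) by simp
  have "\<bar>x / a - y / b\<bar> \<le> \<bar>x\<bar> / a + \<bar>y\<bar> / b"
    using abs_triangle_ineq4[of "x / a" "y / b"] assms(1,2) by simp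
  then have "\<bar>g * (x / a - y / b)\<bar> \<le> g * \<bar>x\<bar> / a + g * \<bar>y\<bar> / b"
    using \<open>0 \<le> g\<close> mult_left_mono by (fastforce simp: abs_mult distrib_left)
  moreover have "g * \<bar>x\<bar> / a \<le> c"
    unfolding g_def using assms(1-3) by (rule sqrt_harmonic_mult_div_le)
  moreover have "g * \<bar>y\<bar> / b \<le> c"
    unfolding g_def using sqrt_harmonic_mult_div_le[OF assms(2,1,4)] by (simp add: ac_simps)
  ultimately show ?thesis
    unfolding g_def by linarith
qed

lemma sqrt_mult_add_one_le:
  fixes l m :: real
  assumes "0 \<le> l" "1 \<le> m"
  shows "2 * sqrt (l * m) + 1 \<le> (2 * sqrt l + 1) * sqrt m"
proof -
  have "1 \<le> sqrt m"
    using assms(2) by simp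
  then show ?thesis
    by (simp add: real_sqrt_mult distrib_right)
qed

lemma change_point_tail_nonneg:
  fixes N :: nat and T \<delta> :: real
  assumes "0 \<le> T" "0 < \<delta>"
  shows "0 \<le> 12 * ln (real N) / (T ^ 3 * real N) + 24 * T / (real N * ln (real N) * \<delta>)"
  using assms by (cases "N = 0") auto

lemma change_point_tail_ge:
  fixes T N \<delta> :: real
  assumes "2 \<le> N" "0 < \<delta>" "\<delta> \<le> T"
  shows "4 / N ^ 5 \<le> 12 * ln N / (T ^ 3 * N) + 24 * T / (N * ln N * \<delta>)"
proof -
  have "0 < ln N" "ln N \<le> N"
    using assms(1) ln_le_minus_one[of N] by auto
  have "N * N \<le> N ^ 5"
    using assms(1) by (simp add: power_increasing power2_eq_square[symmetric])
  then have "4 / N ^ 5 \<le> 24 / (N * N)"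
    using assms(1) by (intro frac_le) auto
  also have "\<dots> \<le> 24 / (N * ln N)"
    using assms(1) \<open>0 < ln N\<close> \<open>ln N \<le> N\<close> by (intro divide_left_mono mult_left_mono) auto
  also have "\<dots> \<le> 24 / (N * ln N) * (T / \<delta>)"
    using mult_left_mono[of 1 "T / \<delta>" "24 / (N * ln N)"] assms \<open>0 < ln N\<close> by simp
  also have "\<dots> = 24 * T / (N * ln N * \<delta>)"
    by simp
  moreover have "0 \<le> 12 * ln N / (T ^ 3 * N)"
    using assms \<open>0 < ln N\<close> by simp
  ultimately show ?thesis
    by linarith
qed

lemma change_point_threshold_ge:
  fixes T N \<delta> :: real
  assumes "2 \<le> T" "2 \<le> N" "0 < \<delta>" "\<delta> \<le> T"
  shows "2 * (2 * sqrt (ln N) + 1)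
    \<le> sqrt (ln (T ^ 4 / (12 * \<delta>)) + ln N) + 6 * sqrt (ln N) + 48 * ln N / sqrt N"
proof -
  have "T ^ 3 / 12 = T ^ 4 / (12 * T)"
    using assms(1) by (simp add: power_eq_if)
  also have "\<dots> \<le> T ^ 4 / (12 * \<delta>)"
    using assms by (intro divide_left_mono) auto
  finally have "T ^ 3 / 12 \<le> T ^ 4 / (12 * \<delta>)" .
  moreover have "8 \<le> T ^ 3"
    using power_mono[OF assms(1), of 3] by simp
  ultimately have "8 / 12 * 2 \<le> T ^ 4 / (12 * \<delta>) * N"
    using assms(2) by (intro mult_mono) auto
  then have "1 \<le> T ^ 4 / (12 * \<delta>) * N"
    by linarith
  moreover have "0 < T ^ 4 / (12 * \<delta>)"
    using assms by simp
  ultimately have "0 \<le> ln (T ^ 4 / (12 * \<delta>) * N)"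
    by simp
  also have "\<dots> = ln (T ^ 4 / (12 * \<delta>)) + ln N"
    using \<open>0 < T ^ 4 / (12 * \<delta>)\<close> assms(2) by (intro ln_mult_pos) auto
  finally have "0 \<le> sqrt (ln (T ^ 4 / (12 * \<delta>)) + ln N)"
    by simp
  moreover have "48 * ln N / sqrt N = 2 * (24 * ln N / sqrt N)" "0 \<le> sqrt (ln N)"
      "2 * (2 * sqrt (ln N) + 1) = 4 * sqrt (ln N) + 2"
    using assms(2) by simp_all
  ultimately show ?thesis
    using one_le_sqrt_ln_add[OF assms(2)] by linarith
qed

section \<open>The multi-sample model\<close>

definition sample_block :: "(nat \<Rightarrow> nat) \<Rightarrow> nat \<Rightarrow> nat \<Rightarrow> (nat \<times> nat) set" where
  "sample_block n s e = Sigma {s..e} (\<lambda>t. {1..n t})"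

definition sample_blocks :: "(nat \<Rightarrow> nat) \<Rightarrow> nat \<Rightarrow> (nat \<times> nat) set set" where
  "sample_blocks n T = (\<lambda>p. sample_block n (fst p) (snd p)) ` {p \<in> {1..T} \<times> {1..T}. fst p \<le> snd p}"

lemma card_sample_block: "card (sample_block n s e) = nsum n s e"
  unfolding sample_block_def nsum_def by (subst card_SigmaI) auto

lemma sum_sample_block: "(\<Sum>p\<in>sample_block n s e. f p) = (\<Sum>t = s..e. \<Sum>i = 1..n t. f (t, i))"
  unfolding sample_block_def by (simp add: sum.Sigma)

lemma sample_block_mono: "s' \<le> s \<Longrightarrow> e \<le> e' \<Longrightarrow> sample_block n s e \<subseteq> sample_block n s' e'"
  unfolding sample_block_def by auto

lemma sample_block_in_sample_blocks:
  "1 \<le> s \<Longrightarrow> s \<le> e \<Longrightarrow> e \<le> T \<Longrightarrow> sample_block n s e \<in> sample_blocks n T"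
  unfolding sample_blocks_def by (intro image_eqI[of _ _ "(s, e)"]) auto

lemma sample_blocksE:
  assumes "J \<in> sample_blocks n T"
  obtains s e where "1 \<le> s" "s \<le> e" "e \<le> T" "J = sample_block n s e"
  using assms unfolding sample_blocks_def by auto

lemma finite_sample_blocks: "finite (sample_blocks n T)"
proof -
  have "finite {p \<in> {1..T} \<times> {1..T}. fst p \<le> snd p}"
    by (rule finite_subset[of _ "{1..T} \<times> {1..T}"]) auto
  then show ?thesis
    unfolding sample_blocks_def by simp
qed

lemma card_sample_blocks_le: "card (sample_blocks n T) \<le> T ^ 2"
proof -
  have "card (sample_blocks n T) \<le> card {p \<in> {1..T} \<times> {1..T}. fst p \<le> snd p}"
    unfolding sample_blocks_def
    by (rule card_image_le, rule finite_subset[of _ "{1..T} \<times> {1..T}"]) auto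
  also have "\<dots> \<le> card ({1..T} \<times> {1..T})"
    by (rule card_mono) auto
  finally show ?thesis
    by (simp add: power2_eq_square)
qed

lemma nsum_split:
  assumes "s \<le> b" "b < e"
  shows "nsum n s e = nsum n s b + nsum n (b + 1) e"
proof -
  have "{s..e} = {s..b} \<union> {b + 1..e}"
    using assms by auto
  then show ?thesis
    unfolding nsum_def by (simp add: sum.union_disjoint)
qed

locale change_point_sample = prob_space M for M :: "'a measure" +
  fixes Y :: "nat \<Rightarrow> nat \<Rightarrow> 'a \<Rightarrow> real" and n :: "nat \<Rightarrow> nat" and T :: nat
  assumes sample_size_pos: "\<And>t. t \<in> {1..T} \<Longrightarrow> 1 \<le> n t"
    and indep_sample: "indep_vars (\<lambda>_. borel) (\<lambda>(t, i). Y t i) {(t, i). t \<in> {1..T} \<and> i \<in> {1..n t}}"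

sublocale change_point_sample \<subseteq> indep_real_family M "\<lambda>(t, i). Y t i" "sample_block n 1 T"
proof
  show "finite (sample_block n 1 T)"
    unfolding sample_block_def by simp
  have "sample_block n 1 T = {(t, i). t \<in> {1..T} \<and> i \<in> {1..n t}}"
    unfolding sample_block_def by auto
  then show "indep_vars (\<lambda>_. borel) (\<lambda>(t, i). Y t i) (sample_block n 1 T)"
    using indep_sample by simp
qed

context change_point_sample
begin

lemma one_le_nsum: "1 \<le> s \<Longrightarrow> s \<le> e \<Longrightarrow> e \<le> T \<Longrightarrow> 1 \<le> nsum n s e"
  using sample_size_pos[of s] member_le_sum[of s "{s..e}" n] unfolding nsum_def by simp

lemma T_le_nsum: "T \<le> nsum n 1 T"
  unfolding nsum_def using sum_mono[of "{1..T}" "\<lambda>_. 1" n] sample_size_pos by simp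

lemma sample_blocks_subset: "J \<in> sample_blocks n T \<Longrightarrow> J \<subseteq> sample_block n 1 T"
  by (auto elim!: sample_blocksE dest: set_mp[OF sample_block_mono, rotated -1])

lemma empty_notin_sample_blocks: "{} \<notin> sample_blocks n T"
proof
  assume "{} \<in> sample_blocks n T"
  then obtain s e where "1 \<le> s" "s \<le> e" "e \<le> T" "sample_block n s e = {}"
    by (auto elim: sample_blocksE)
  moreover have "(s, 1) \<in> sample_block n s e"
    using \<open>1 \<le> s\<close> \<open>s \<le> e\<close> \<open>e \<le> T\<close> sample_size_pos[of s] by (simp add: sample_block_def)
  ultimately show False
    by simp
qed

lemma law_sample: "t \<in> {1..T} \<Longrightarrow> i \<in> {1..n t} \<Longrightarrow>
    measure (law (t, i)) {..z} = measure M {w \<in> space M. Y t i w \<le> z}"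
  using random_variable_X[of "(t, i)"] unfolding law_def sample_block_def
  by (subst measure_distr) (auto intro!: arg_cong[where f = "measure M"])

lemma centered_count_sample_block:
  assumes "1 \<le> s" "e \<le> T"
  shows "centered_count (sample_block n s e) {..z} w =
    (\<Sum>t = s..e. \<Sum>i = 1..n t. (if Y t i w \<le> z then 1 else 0) - (\<integral>x. (if Y t i x \<le> z then 1 else 0) \<partial>M))"
  unfolding centered_count_def sum_sample_block
proof (intro sum.cong refl)
  fix t i assume "t \<in> {s..e}" "i \<in> {1..n t}"
  then have "(t, i) \<in> sample_block n 1 T"
    using assms unfolding sample_block_def by auto
  then have "measure (law (t, i)) {..z} = (\<integral>x. indicator {..z} (Y t i x) \<partial>M)"
    using random_variable_X unfolding law_def by (subst integral_distr[symmetric]) auto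
  also have "\<dots> = (\<integral>x. (if Y t i x \<le> z then 1 else 0) \<partial>M)"
    by (rule Bochner_Integration.integral_cong) (auto simp: indicator_def)
  finally show "indicator {..z} ((\<lambda>(t, i). Y t i) (t, i) w) - measure (law (t, i)) {..z} =
      (if Y t i w \<le> z then 1 else 0) - (\<integral>x. (if Y t i x \<le> z then 1 else 0) \<partial>M)"
    by (simp add: indicator_def)
qed

lemma uniform_bound_over_sample_blocks:
  assumes "2 \<le> T"
  defines "N \<equiv> real (nsum n 1 T)"
  obtains G where "G \<in> sets M" "prob G \<le> 4 / N ^ 5"
    and "\<forall>w\<in>space M - G. \<forall>s e z. 1 \<le> s \<longrightarrow> s \<le> e \<longrightarrow> e \<le> T \<longrightarrow>
      \<bar>centered_count (sample_block n s e) {..z} w\<bar> \<le> (2 * sqrt (ln N) + 1) * sqrt (nsum n s e)"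
proof -
  have "2 \<le> nsum n 1 T"
    using assms(1) T_le_nsum by simp
  then obtain G where "G \<in> sets M" and prob_G: "prob G \<le> 4 * real (card (sample_blocks n T)) / N ^ 7"
    and G: "\<forall>w\<in>space M - G. \<forall>J\<in>sample_blocks n T. \<forall>z.
      \<bar>centered_count J {..z} w\<bar> \<le> 2 * sqrt (ln N * card J) + 1"
    using uniform_bound_over_blocks[OF finite_sample_blocks sample_blocks_subset empty_notin_sample_blocks]
    unfolding card_sample_block N_def by blast
  have "2 \<le> N" "real T \<le> N"
    unfolding N_def using assms(1) T_le_nsum by linarith+
  then have "real (card (sample_blocks n T)) \<le> N ^ 2"
    using card_sample_blocks_le[of n T] power_mono[of "real T" N 2]
    by (metis (mono_tags, opaque_lifting) of_nat_le_iff of_nat_power order_trans of_nat_0_le_iff)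
  then have "4 * real (card (sample_blocks n T)) / N ^ 7 \<le> 4 * N ^ 2 / N ^ 7"
    using \<open>2 \<le> N\<close> by (intro divide_right_mono) auto
  also have "\<dots> = 4 / N ^ 5"
    using \<open>2 \<le> N\<close> by (simp add: power_eq_if)
  finally have "prob G \<le> 4 / N ^ 5"
    using prob_G by linarith
  moreover have "\<bar>centered_count (sample_block n s e) {..z} w\<bar> \<le> (2 * sqrt (ln N) + 1) * sqrt (nsum n s e)"
    if "w \<in> space M - G" "1 \<le> s" "s \<le> e" "e \<le> T" for w s e z
  proof -
    have "\<bar>centered_count (sample_block n s e) {..z} w\<bar> \<le> 2 * sqrt (ln N * card (sample_block n s e)) + 1"
      using G that(1) sample_block_in_sample_blocks[OF that(2-4)] by blast
    also have "\<dots> = 2 * sqrt (ln N * nsum n s e) + 1"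
      by (simp add: card_sample_block)
    also have "\<dots> \<le> (2 * sqrt (ln N) + 1) * sqrt (nsum n s e)"
      using \<open>2 \<le> N\<close> one_le_nsum[OF that(2-4)] by (intro sqrt_mult_add_one_le) auto
    finally show ?thesis .
  qed
  ultimately show ?thesis
    using that \<open>G \<in> sets M\<close> by blast
qed

lemma normalized_count_le:
  assumes "\<bar>centered_count (sample_block n s e) {..z} w\<bar> \<le> c * sqrt (nsum n s e)"
    and "1 \<le> s" "s \<le> e" "e \<le> T"
  shows "\<bar>(1 / sqrt (nsum n s e)) * (\<Sum>t = s..e. \<Sum>i = 1..n t.
      (if Y t i w \<le> z then 1 else 0) - (\<integral>x. (if Y t i x \<le> z then 1 else 0) \<partial>M))\<bar> \<le> c"
  using assms(1) one_le_nsum[OF assms(2-4)] centered_count_sample_block[OF assms(2,4)]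
  by (simp add: abs_mult divide_le_eq mult.commute)

lemma normalized_count_exceedance_subset:
  assumes good: "\<forall>w\<in>space M - G. \<forall>s e z. 1 \<le> s \<longrightarrow> s \<le> e \<longrightarrow> e \<le> T \<longrightarrow>
      \<bar>centered_count (sample_block n s e) {..z} w\<bar> \<le> c * sqrt (nsum n s e)"
    and "c \<le> r"
  shows "{w \<in> space M. \<exists>s e z. 1 \<le> s \<and> s < e \<and> e \<le> T \<and>
    \<bar>(1 / sqrt (nsum n s e)) * (\<Sum>t = s..e. \<Sum>i = 1..n t.
      (if Y t i w \<le> z then 1 else 0) - (\<integral>x. (if Y t i x \<le> z then 1 else 0) \<partial>M))\<bar> > r} \<subseteq> G"
    (is "?E \<subseteq> G")
proof
  fix w
  assume "w \<in> ?E"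
  then obtain s e z where "w \<in> space M" "1 \<le> s" "s < e" "e \<le> T"
    and exceeds: "\<bar>(1 / sqrt (nsum n s e)) * (\<Sum>t = s..e. \<Sum>i = 1..n t.
      (if Y t i w \<le> z then 1 else 0) - (\<integral>x. (if Y t i x \<le> z then 1 else 0) \<partial>M))\<bar> > r"
    by blast
  show "w \<in> G"
  proof (rule ccontr)
    assume "w \<notin> G"
    then have "\<bar>(1 / sqrt (nsum n s e)) * (\<Sum>t = s..e. \<Sum>i = 1..n t.
      (if Y t i w \<le> z then 1 else 0) - (\<integral>x. (if Y t i x \<le> z then 1 else 0) \<partial>M))\<bar> \<le> c"
      using good \<open>w \<in> space M\<close> \<open>1 \<le> s\<close> \<open>s < e\<close> \<open>e \<le> T\<close>
      by (intro normalized_count_le) auto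
    then show False
      using exceeds assms(2) by linarith
  qed
qed

end

locale change_point_model = change_point_sample +
  fixes F :: "nat \<Rightarrow> real \<Rightarrow> real"
  assumes cdf_sample: "\<And>t i z. t \<in> {1..T} \<Longrightarrow> i \<in> {1..n t} \<Longrightarrow> F t z = measure M {w \<in> space M. Y t i w \<le> z}"
begin

lemma Fhat_minus_Fpop:
  assumes "1 \<le> s" "e \<le> T"
  shows "Fhat Y n s e z w - Fpop F n s e z = centered_count (sample_block n s e) {..z} w / nsum n s e"
proof -
  let ?A = "\<Sum>t = s..e. \<Sum>i = 1..n t. (if Y t i w \<le> z then 1 else 0) :: real"
  let ?B = "\<Sum>t = s..e. \<Sum>i = 1..n t. F t z"
  have "(\<Sum>t = s..e. real (n t) * F t z) = ?B"
    by simp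
  then have "Fhat Y n s e z w - Fpop F n s e z = (?A - ?B) / nsum n s e"
    unfolding Fhat_def Fpop_def by (simp add: diff_divide_distrib)
  also have "?A - ?B = (\<Sum>t = s..e. \<Sum>i = 1..n t. (if Y t i w \<le> z then 1 else 0) - F t z)"
    by (simp add: sum_subtractf)
  also have "\<dots> = centered_count (sample_block n s e) {..z} w"
    unfolding centered_count_def sum_sample_block
    using assms by (intro sum.cong refl) (simp add: cdf_sample law_sample indicator_def)
  finally show ?thesis .
qed

lemma cusum_error_le:
  assumes bound: "\<And>s e. 1 \<le> s \<Longrightarrow> s \<le> e \<Longrightarrow> e \<le> T \<Longrightarrow>
      \<bar>centered_count (sample_block n s e) {..z} w\<bar> \<le> c * sqrt (nsum n s e)"
    and "1 \<le> s" "s < b" "b < e" "e \<le> T"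
  shows "\<bar>Dcusum Y n s b e z w - Deltacusum F n s b e z\<bar> \<le> 2 * c"
proof -
  let ?x = "centered_count (sample_block n s b) {..z} w"
  let ?y = "centered_count (sample_block n (b + 1) e) {..z} w"
  have "Dcusum Y n s b e z w - Deltacusum F n s b e z =
      sqrt (real (nsum n s b) * real (nsum n (b + 1) e) / (real (nsum n s b) + real (nsum n (b + 1) e))) *
      (?x / nsum n s b - ?y / nsum n (b + 1) e)"
    unfolding Dcusum_def Deltacusum_def nsum_split[OF less_imp_le \<open>b < e\<close>, OF \<open>s < b\<close>]
    using Fhat_minus_Fpop[of s b] Fhat_minus_Fpop[of "b + 1" e] assms(2-5)
    by (simp add: right_diff_distrib[symmetric] algebra_simps)
  also have "\<bar>\<dots>\<bar> \<le> 2 * c"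
  proof (rule cusum_deviation_le)
    show "0 < real (nsum n s b)" "0 < real (nsum n (b + 1) e)"
      using assms(2-5) one_le_nsum[of s b] one_le_nsum[of "b + 1" e] by simp_all
    show "\<bar>?x\<bar> \<le> c * sqrt (nsum n s b)" "\<bar>?y\<bar> \<le> c * sqrt (nsum n (b + 1) e)"
      using assms(2-5) by (simp_all add: bound)
  qed
  finally show ?thesis .
qed

lemma cusum_exceedance_subset:
  assumes good: "\<forall>w\<in>space M - G. \<forall>s e z. 1 \<le> s \<longrightarrow> s \<le> e \<longrightarrow> e \<le> T \<longrightarrow>
      \<bar>centered_count (sample_block n s e) {..z} w\<bar> \<le> c * sqrt (nsum n s e)"
    and "2 * c \<le> r"
  shows "{w \<in> space M. \<exists>s b e z. 1 \<le> s \<and> s < b \<and> b < e \<and> e \<le> T \<and>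
    \<bar>Dcusum Y n s b e z w - Deltacusum F n s b e z\<bar> > r} \<subseteq> G" (is "?E \<subseteq> G")
proof
  fix w
  assume "w \<in> ?E"
  then obtain s b e z where "w \<in> space M" "1 \<le> s" "s < b" "b < e" "e \<le> T"
    and exceeds: "\<bar>Dcusum Y n s b e z w - Deltacusum F n s b e z\<bar> > r"
    by blast
  show "w \<in> G"
  proof (rule ccontr)
    assume "w \<notin> G"
    then have "\<bar>Dcusum Y n s b e z w - Deltacusum F n s b e z\<bar> \<le> 2 * c"
      using good \<open>w \<in> space M\<close> \<open>1 \<le> s\<close> \<open>s < b\<close> \<open>b < e\<close> \<open>e \<le> T\<close>
      by (intro cusum_error_le) auto
    then show False
      using exceeds assms(2) by linarith
  qed
qed

end

theorem lemma6:
  fixes M :: "'a measure"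
    and Y :: "nat \<Rightarrow> nat \<Rightarrow> 'a \<Rightarrow> real"
    and F :: "nat \<Rightarrow> real \<Rightarrow> real"
    and n :: "nat \<Rightarrow> nat"
    and T K :: nat
    and eta :: "nat \<Rightarrow> nat"
    and \<delta> :: real
  assumes P: "prob_space M"
    and n_pos: "\<And>t. t \<in> {1..T} \<Longrightarrow> n t \<ge> 1"
    and meas: "\<And>t i. t \<in> {1..T} \<Longrightarrow> i \<in> {1..n t} \<Longrightarrow> Y t i \<in> borel_measurable M"
    and indep: "prob_space.indep_vars M (\<lambda>_. borel) (\<lambda>(t, i). Y t i)
                  {(t, i). t \<in> {1..T} \<and> i \<in> {1..n t}}"
    and distr: "\<And>t i z. t \<in> {1..T} \<Longrightarrow> i \<in> {1..n t} \<Longrightarrow>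
                  F t z = measure M {w \<in> space M. Y t i w \<le> z}"
    and eta0: "eta 0 = 0"
    and etaK: "eta (K + 1) = T"
    and eta_mono: "\<And>k. k \<le> K \<Longrightarrow> eta k < eta (k + 1)"
    and const: "\<And>k t. k \<le> K \<Longrightarrow> t \<in> {eta k + 1..eta (k + 1)} \<Longrightarrow> F t = F (eta (k + 1))"
    and change: "\<And>k. k \<in> {1..K} \<Longrightarrow> F (eta k) \<noteq> F (eta k + 1)"
    and spacing: "\<And>k. k \<in> {1..K + 1} \<Longrightarrow> real (eta k - eta (k - 1)) \<ge> \<delta>"
    and delta_pos: "\<delta> > 0"
  shows
    "measure M {w \<in> space M. \<exists>s b e z. 1 \<le> s \<and> s < b \<and> b < e \<and> e \<le> T \<and>
        \<bar>Dcusum Y n s b e z w - Deltacusum F n s b e z\<bar> >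
          sqrt (ln (real T ^ 4 / (12 * \<delta>)) + ln (real (nsum n 1 T)))
          + 6 * sqrt (ln (real (nsum n 1 T)))
          + 48 * ln (real (nsum n 1 T)) / sqrt (real (nsum n 1 T))}
     \<le> 12 * ln (real (nsum n 1 T)) / (real T ^ 3 * real (nsum n 1 T))
       + 24 * real T / (real (nsum n 1 T) * ln (real (nsum n 1 T)) * \<delta>)
   \<and>
    measure M {w \<in> space M. \<exists>s e z. 1 \<le> s \<and> s < e \<and> e \<le> T \<and>
        \<bar>(1 / sqrt (real (nsum n s e))) *
           (\<Sum>t = s..e. \<Sum>i = 1..n t.
              ((if Y t i w \<le> z then 1 else 0)
               - (\<integral>x. (if Y t i x \<le> z then 1 else 0) \<partial>M)))\<bar> >
          sqrt (ln (real T ^ 4 / (12 * \<delta>)) + ln (real (nsum n 1 T)))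
          + 6 * sqrt (ln (real (nsum n 1 T)))
          + 48 * ln (real (nsum n 1 T)) / sqrt (real (nsum n 1 T))}
     \<le> 12 * ln (real (nsum n 1 T)) / (real T ^ 3 * real (nsum n 1 T))
       + 24 * real T / (real (nsum n 1 T) * ln (real (nsum n 1 T)) * \<delta>)"
proof -
  interpret change_point_model M Y n T F
    using P n_pos indep distr
    by (simp add: change_point_model_def change_point_model_axioms_def change_point_sample_def
        change_point_sample_axioms_def)
  have "\<delta> \<le> real T"
    using spacing[of "K + 1"] etaK by simp
  show ?thesis (is "measure M ?E1 \<le> ?R \<and> measure M ?E2 \<le> ?R")
  proof (cases "2 \<le> T")
    case False
    then have "?E1 = {}" "?E2 = {}"
      by auto
    moreover have "0 \<le> ?R"
      using delta_pos by (intro change_point_tail_nonneg) auto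
    ultimately show ?thesis
      by (simp only: measure_empty conj_absorb)
  next
    case True
    define N where "N = real (nsum n 1 T)"
    define c where "c = 2 * sqrt (ln N) + 1"
    obtain G where "G \<in> sets M" "prob G \<le> 4 / N ^ 5"
      and good: "\<forall>w\<in>space M - G. \<forall>s e z. 1 \<le> s \<longrightarrow> s \<le> e \<longrightarrow> e \<le> T \<longrightarrow>
        \<bar>centered_count (sample_block n s e) {..z} w\<bar> \<le> c * sqrt (nsum n s e)"
      using uniform_bound_over_sample_blocks[OF True] unfolding N_def c_def by blast
    have "2 \<le> N"
      unfolding N_def using True T_le_nsum by linarith
    then have "0 \<le> c"
      unfolding c_def by simp
    moreover have "2 * c \<le> sqrt (ln (real T ^ 4 / (12 * \<delta>)) + ln N) + 6 * sqrt (ln N) + 48 * ln N / sqrt N"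
      unfolding c_def using True \<open>2 \<le> N\<close> delta_pos \<open>\<delta> \<le> real T\<close> by (intro change_point_threshold_ge) auto
    ultimately have "?E1 \<subseteq> G" "?E2 \<subseteq> G"
      unfolding N_def
      by (intro cusum_exceedance_subset[OF good] normalized_count_exceedance_subset[OF good]; linarith)+
    moreover have "4 / N ^ 5 \<le> ?R"
      unfolding N_def[symmetric] using \<open>2 \<le> N\<close> delta_pos \<open>\<delta> \<le> real T\<close> by (rule change_point_tail_ge)
    ultimately show ?thesis
      using \<open>G \<in> sets M\<close> \<open>prob G \<le> 4 / N ^ 5\<close> finite_measure_mono by (meson order_trans)
  qed
qed

end
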